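(* Let \(X\) be a nonempty set, let \((Q, \preccurlyeq_Q)\) be a poset with smallest element \(q_0\), and let \(d \colon X^2 \to Q\) be a \(Q\)-pseudoultrametric on \(X\). Then \(d^{-1}(q_0)=\{\langle x,y\rangle\in X^2: d(x,y)=q_0\}\) is an equivalence relation on \(X\) and \(d\) is \(q_0\)-coherent.
   Context: A mapping \(d\colon X^2\to Q\) is a \(Q\)-pseudoultrametric if \(d\) is symmetric, \(d(x,x)=q_0\) for all \(x\in X\), and for every triple \(\langle x_1,x_2,x_3\rangle\) of points of \(X\) there is a permutation \((i_1,i_2,i_3)\) of \((1,2,3)\) with \(d(x_{i_1},x_{i_3})\preccurlyeq_Q d(x_{i_1},x_{i_2})\) and \(d(x_{i_1},x_{i_2})=d(x_{i_2},x_{i_3})\). A mapping \(\Phi\) with domain \(X^2\) is strongly consistent with an equivalence relation \(R\) on \(X\) if \(\langle x_1,x_2\rangle\in R\) and \(\langle x_3,x_4\rangle\in R\) imply \(\Phi(x_1,x_3)=\Phi(x_2,x_4)\); for \(a_0\) in the range of \(\Phi\), \(\Phi\) is \(a_0\)-coherent if the fiber \(\Phi^{-1}(a_0)\) is an equivalence relation on \(X\) and \(\Phi\) is strongly consistent with it. *)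

theory Defs
  imports Main
begin

definition poset_on :: "'q set \<Rightarrow> ('q \<Rightarrow> 'q \<Rightarrow> bool) \<Rightarrow> bool" where
  "poset_on Q le \<longleftrightarrow>
     (\<forall>q\<in>Q. le q q) \<and>
     (\<forall>p\<in>Q. \<forall>q\<in>Q. le p q \<and> le q p \<longrightarrow> p = q) \<and>
     (\<forall>p\<in>Q. \<forall>q\<in>Q. \<forall>r\<in>Q. le p q \<and> le q r \<longrightarrow> le p r)"

definition smallest_el :: "'q set \<Rightarrow> ('q \<Rightarrow> 'q \<Rightarrow> bool) \<Rightarrow> 'q \<Rightarrow> bool" where
  "smallest_el Q le q0 \<longleftrightarrow> q0 \<in> Q \<and> (\<forall>q\<in>Q. le q0 q)"

definition pseudoultrametric ::
  "'a set \<Rightarrow> 'q set \<Rightarrow> ('q \<Rightarrow> 'q \<Rightarrow> bool) \<Rightarrow> 'q \<Rightarrow> ('a \<Rightarrow> 'a \<Rightarrow> 'q) \<Rightarrow> bool" where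
  "pseudoultrametric X Q le q0 d \<longleftrightarrow>
     (\<forall>x\<in>X. \<forall>y\<in>X. d x y \<in> Q) \<and>
     (\<forall>x\<in>X. \<forall>y\<in>X. d x y = d y x) \<and>
     (\<forall>x\<in>X. d x x = q0) \<and>
     (\<forall>x1\<in>X. \<forall>x2\<in>X. \<forall>x3\<in>X. let x = (\<lambda>i::nat. if i = 1 then x1 else if i = 2 then x2 else x3) in
        \<exists>i1 i2 i3. {i1, i2, i3} = {1, 2, 3} \<and>
          le (d (x i1) (x i3)) (d (x i1) (x i2)) \<and> d (x i1) (x i2) = d (x i2) (x i3))"

definition strongly_consistent :: "'a set \<Rightarrow> ('a \<Rightarrow> 'a \<Rightarrow> 'b) \<Rightarrow> ('a \<times> 'a) set \<Rightarrow> bool" where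
  "strongly_consistent X Phi R \<longleftrightarrow>
     (\<forall>x1\<in>X. \<forall>x2\<in>X. \<forall>x3\<in>X. \<forall>x4\<in>X.
        (x1, x2) \<in> R \<and> (x3, x4) \<in> R \<longrightarrow> Phi x1 x3 = Phi x2 x4)"

definition fiber2 :: "'a set \<Rightarrow> ('a \<Rightarrow> 'a \<Rightarrow> 'b) \<Rightarrow> 'b \<Rightarrow> ('a \<times> 'a) set" where
  "fiber2 X Phi a0 = {(x, y). x \<in> X \<and> y \<in> X \<and> Phi x y = a0}"

definition coherent :: "'a set \<Rightarrow> ('a \<Rightarrow> 'a \<Rightarrow> 'b) \<Rightarrow> 'b \<Rightarrow> bool" where
  "coherent X Phi a0 \<longleftrightarrow>
     a0 \<in> {Phi x y | x y. x \<in> X \<and> y \<in> X} \<and>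
     equiv X (fiber2 X Phi a0) \<and> strongly_consistent X Phi (fiber2 X Phi a0)"

end

theory Submission
  imports Defs
begin

text \<open>Every triangle of a pseudoultrametric is isosceles, with base no longer than the two
  equal legs. Let \<open>d x y = q\<^sub>0\<close> and consider the triangle \<open>x, y, z\<close>: if \<open>x y\<close> is the base,
  the legs give \<open>d x z = d y z\<close>; if \<open>x y\<close> is a leg, the base lies below \<open>q\<^sub>0\<close>, so all three
  sides equal \<open>q\<^sub>0\<close>. Thus \<open>d\<close> is constant on products of classes of \<open>d\<^sup>-\<^sup>1(q\<^sub>0)\<close>, which gives
  both the transitivity of \<open>d\<^sup>-\<^sup>1(q\<^sub>0)\<close> and strong consistency.\<close>

lemma smallest_el_le_imp_eq:
  assumes "poset_on Q le" "smallest_el Q le q0" "q \<in> Q" "le q q0"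
  shows "q = q0"
  using assms unfolding poset_on_def smallest_el_def by blast

lemma pseudoultrametric_in_range:
  "pseudoultrametric X Q le q0 d \<Longrightarrow> x \<in> X \<Longrightarrow> y \<in> X \<Longrightarrow> d x y \<in> Q"
  unfolding pseudoultrametric_def by blast

lemma pseudoultrametric_sym:
  "pseudoultrametric X Q le q0 d \<Longrightarrow> x \<in> X \<Longrightarrow> y \<in> X \<Longrightarrow> d x y = d y x"
  unfolding pseudoultrametric_def by blast

lemma pseudoultrametric_diag:
  "pseudoultrametric X Q le q0 d \<Longrightarrow> x \<in> X \<Longrightarrow> d x x = q0"
  unfolding pseudoultrametric_def by blast

lemma permutation_of_three_cases:
  fixes i1 i2 i3 :: nat
  assumes "{i1, i2, i3} = {1, 2, 3}"
  obtains "i2 = 1" "{i1, i3} = {2, 3}" | "i2 = 2" "{i1, i3} = {1, 3}" | "i2 = 3" "{i1, i3} = {1, 2}"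
proof -
  have "distinct [i1, i2, i3]"
    by (rule card_distinct) (simp only: list.set assms, simp)
  then have "i2 \<in> {1, 2, 3}" and others: "{i1, i3} = {1, 2, 3} - {i2}"
    using assms by auto
  then consider "i2 = 1" | "i2 = 2" | "i2 = 3"
    by blast
  then show thesis
    using others that by cases (simp_all add: insert_Diff_if)
qed

lemma pseudoultrametric_isosceles:
  assumes d: "pseudoultrametric X Q le q0 d" and "x \<in> X" "y \<in> X" "z \<in> X"
  obtains "d x y = d y z" "le (d x z) (d x y)"
    | "d x y = d x z" "le (d y z) (d x y)"
    | "d x z = d y z" "le (d x y) (d x z)"
proof -
  let ?p = "\<lambda>i::nat. if i = 1 then x else if i = 2 then y else z"
  obtain i1 i2 i3 where perm: "{i1, i2, i3} = {1, 2, 3}"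
    and base: "le (d (?p i1) (?p i3)) (d (?p i1) (?p i2))"
    and legs: "d (?p i1) (?p i2) = d (?p i2) (?p i3)"
    using d \<open>x \<in> X\<close> \<open>y \<in> X\<close> \<open>z \<in> X\<close> unfolding pseudoultrametric_def Let_def by blast
  have sym: "d y x = d x y" "d z x = d x z" "d z y = d y z"
    using pseudoultrametric_sym[OF d] \<open>x \<in> X\<close> \<open>y \<in> X\<close> \<open>z \<in> X\<close> by auto
  from perm show thesis
  proof (cases rule: permutation_of_three_cases)
    case 1
    then have "i1 = 2 \<and> i3 = 3 \<or> i1 = 3 \<and> i3 = 2" by (auto simp: doubleton_eq_iff)
    with 1 show thesis using base legs that(2) by (auto simp: sym)
  next
    case 2
    then have "i1 = 1 \<and> i3 = 3 \<or> i1 = 3 \<and> i3 = 1" by (auto simp: doubleton_eq_iff)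
    with 2 show thesis using base legs that(1) by (auto simp: sym)
  next
    case 3
    then have "i1 = 1 \<and> i3 = 2 \<or> i1 = 2 \<and> i3 = 1" by (auto simp: doubleton_eq_iff)
    with 3 show thesis using base legs that(3) by (auto simp: sym)
  qed
qed

lemma pseudoultrametric_eq_if_dist_smallest:
  assumes Q: "poset_on Q le" "smallest_el Q le q0"
    and d: "pseudoultrametric X Q le q0 d"
    and "x \<in> X" "y \<in> X" "z \<in> X" and xy: "d x y = q0"
  shows "d x z = d y z"
  using d \<open>x \<in> X\<close> \<open>y \<in> X\<close> \<open>z \<in> X\<close>
proof (cases rule: pseudoultrametric_isosceles)
  case 1
  then have "le (d x z) q0"
    using xy by simp
  then have "d x z = q0"
    using smallest_el_le_imp_eq[OF Q] pseudoultrametric_in_range[OF d \<open>x \<in> X\<close> \<open>z \<in> X\<close>] by blast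
  with 1 xy show ?thesis by simp
next
  case 2
  then have "le (d y z) q0"
    using xy by simp
  then have "d y z = q0"
    using smallest_el_le_imp_eq[OF Q] pseudoultrametric_in_range[OF d \<open>y \<in> X\<close> \<open>z \<in> X\<close>] by blast
  with 2 xy show ?thesis by simp
qed

lemma equiv_fiber2_smallest:
  assumes Q: "poset_on Q le" "smallest_el Q le q0"
    and d: "pseudoultrametric X Q le q0 d"
  shows "equiv X (fiber2 X d q0)"
proof (rule equivI)
  show "fiber2 X d q0 \<subseteq> X \<times> X"
    by (auto simp: fiber2_def)
  show "refl_on X (fiber2 X d q0)"
    using pseudoultrametric_diag[OF d] by (auto simp: refl_on_def fiber2_def)
  show "sym (fiber2 X d q0)"
    using pseudoultrametric_sym[OF d] by (auto simp: sym_def fiber2_def)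
  show "trans (fiber2 X d q0)"
  proof (rule transI)
    fix x y z
    assume "(x, y) \<in> fiber2 X d q0" "(y, z) \<in> fiber2 X d q0"
    then have "x \<in> X" "y \<in> X" "z \<in> X" "d y x = q0" "d y z = q0"
      using pseudoultrametric_sym[OF d] by (auto simp: fiber2_def)
    then have "d x z = q0"
      using pseudoultrametric_eq_if_dist_smallest[OF Q d, of y x z] by simp
    with \<open>x \<in> X\<close> \<open>z \<in> X\<close> show "(x, z) \<in> fiber2 X d q0"
      by (simp add: fiber2_def)
  qed
qed

lemma strongly_consistent_fiber2_smallest:
  assumes Q: "poset_on Q le" "smallest_el Q le q0"
    and d: "pseudoultrametric X Q le q0 d"
  shows "strongly_consistent X d (fiber2 X d q0)"
  unfolding strongly_consistent_def
proof (intro ballI impI)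
  fix x1 x2 x3 x4
  assume X: "x1 \<in> X" "x2 \<in> X" "x3 \<in> X" "x4 \<in> X"
    and "(x1, x2) \<in> fiber2 X d q0 \<and> (x3, x4) \<in> fiber2 X d q0"
  then have "d x1 x2 = q0" "d x3 x4 = q0"
    by (auto simp: fiber2_def)
  note eq = pseudoultrametric_eq_if_dist_smallest[OF Q d] and sym = pseudoultrametric_sym[OF d]
  have "d x1 x3 = d x2 x3" using eq X \<open>d x1 x2 = q0\<close> by blast
  also have "\<dots> = d x3 x2" using sym X by blast
  also have "\<dots> = d x4 x2" using eq X \<open>d x3 x4 = q0\<close> by blast
  also have "\<dots> = d x2 x4" using sym X by blast
  finally show "d x1 x3 = d x2 x4" .
qed

theorem proposition3p16:
  fixes X :: "'a set" and Q :: "'q set" and le :: "'q \<Rightarrow> 'q \<Rightarrow> bool"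
    and q0 :: 'q and d :: "'a \<Rightarrow> 'a \<Rightarrow> 'q"
  assumes "X \<noteq> {}"
    and "poset_on Q le"
    and "smallest_el Q le q0"
    and "pseudoultrametric X Q le q0 d"
  shows "equiv X (fiber2 X d q0) \<and> coherent X d q0"
proof -
  have equiv: "equiv X (fiber2 X d q0)"
    using equiv_fiber2_smallest assms(2-4) .
  obtain x where "x \<in> X"
    using assms(1) by blast
  then have "q0 \<in> {d x y | x y. x \<in> X \<and> y \<in> X}"
    using pseudoultrametric_diag[OF assms(4)] by force
  with equiv show ?thesis
    using strongly_consistent_fiber2_smallest[OF assms(2-4)] unfolding coherent_def by blast
qed

end
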